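(* Let $\{F_n\}$ be the Fibonacci sequence, $F_0=0$, $F_1=1$, $F_{n+2}=F_{n+1}+F_n$. Then \[ \{F_n\}=\sum_{k=0}^{\infty} I_0^{\,k+1}\{a_n[x^k/k!]\}_L , \] where the sum is taken termwise (for each index only finitely many summands are nonzero).
   Context: Sequences are indexed by $n=0,1,2,\dots$; sums of sequences are termwise. The insertion operator is $I_0\{a_n\}=0,a_0,a_1,a_2,\dots$, and $I_0^{j}$ denotes $j$-fold application. The left integral is $\mathcal{I}_L^0\{a_n\}=\{\sum_{k=0}^{n-1}a_k\}$ (empty sum $=0$). Define $\{a_n[x^0/0!]\}_L=\{1\}=1,1,1,\dots$, $\{a_n[x^1/1!]\}_L=\{n\}=0,1,2,\dots$, and for $k\ge 2$, $\{a_n[x^k/k!]\}_L=(\mathcal{I}_L^0)^{k-1}\{n\}$ (the $(k-1)$-fold left integral of $0,1,2,\dots$). *)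

theory Defs
  imports Main
begin

text \<open>Sequences are functions nat => nat (all sequences involved are nonnegative integers).\<close>

fun Fibo :: "nat \<Rightarrow> nat" where
  "Fibo 0 = 0"
| "Fibo (Suc 0) = 1"
| "Fibo (Suc (Suc n)) = Fibo (Suc n) + Fibo n"

definition ins0 :: "(nat \<Rightarrow> nat) \<Rightarrow> nat \<Rightarrow> nat" where
  "ins0 a n = (case n of 0 \<Rightarrow> 0 | Suc m \<Rightarrow> a m)"

definition left_int :: "(nat \<Rightarrow> nat) \<Rightarrow> nat \<Rightarrow> nat" where
  "left_int a n = (\<Sum>k<n. a k)"

definition aL :: "nat \<Rightarrow> nat \<Rightarrow> nat" where
  "aL k = (if k = 0 then (\<lambda>n. 1)
           else if k = 1 then (\<lambda>n. n)
           else (left_int ^^ (k - 1)) (\<lambda>n. n))"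

end

theory Submission
  imports Defs "HOL-Number_Theory.Fib"
begin

text \<open>By the hockey-stick identity, \<open>aL k\<close> is the column \<open>n \<mapsto> n choose k\<close> of Pascal's
  triangle, so the \<open>k\<close>-th summand is \<open>n \<mapsto> (n - 1 - k) choose k\<close> for \<open>k < n\<close> and \<open>0\<close>
  otherwise. The sum over \<open>k\<close> is therefore the shallow diagonal sum of Pascal's triangle,
  which is the Fibonacci number \<open>F\<^sub>n\<close>.\<close>

lemma funpow_ins0: "(ins0 ^^ j) a n = (if n < j then 0 else a (n - j))"
proof (induction j arbitrary: n)
  case 0
  then show ?case by simp
next
  case (Suc j)
  then show ?case by (cases n) (auto simp: ins0_def)
qed

lemma left_int_choose: "left_int (\<lambda>i. i choose k) n = n choose Suc k"
proof (cases n)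
  case 0
  then show ?thesis by (simp add: left_int_def)
next
  case (Suc p)
  then show ?thesis
    using sum_choose_upper[of k p] by (simp add: left_int_def lessThan_Suc_atMost)
qed

lemma funpow_left_int_id: "(left_int ^^ m) (\<lambda>i. i) n = n choose Suc m"
proof (induction m arbitrary: n)
  case 0
  then show ?case by simp
next
  case (Suc m)
  then have "(left_int ^^ m) (\<lambda>i. i) = (\<lambda>i. i choose Suc m)"
    by blast
  then show ?case by (simp add: left_int_choose)
qed

lemma aL_eq_choose: "aL k n = n choose k"
  using funpow_left_int_id[of "k - 1" n] by (cases k) (auto simp: aL_def)

lemma shifted_aL_eq: "(ins0 ^^ Suc k) (aL k) n = (if k < n then (n - Suc k) choose k else 0)"
  by (simp add: funpow_ins0 aL_eq_choose del: funpow.simps)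

lemma Fibo_eq_fib: "Fibo n = fib n"
  by (induction n rule: Fibo.induct) auto

lemma fib_eq_sum_diagonal: "fib n = (\<Sum>k<n. (n - Suc k) choose k)"
proof (cases n)
  case 0
  then show ?thesis by simp
next
  case (Suc p)
  then show ?thesis
    using ne_diagonal_fib[of p] by (simp add: atLeast0AtMost lessThan_Suc_atMost)
qed

theorem mainTheorem3:
  shows "\<forall>n. finite {k. (ins0 ^^ (k + 1)) (aL k) n \<noteq> 0} \<and>
             Fibo n = (\<Sum>k | (ins0 ^^ (k + 1)) (aL k) n \<noteq> 0. (ins0 ^^ (k + 1)) (aL k) n)"
proof
  fix n
  let ?t = "\<lambda>k. (ins0 ^^ (k + 1)) (aL k) n"
  have support: "{k. ?t k \<noteq> 0} \<subseteq> {..<n}"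
    by (auto simp: shifted_aL_eq simp del: funpow.simps split: if_splits)
  have "(\<Sum>k | ?t k \<noteq> 0. ?t k) = (\<Sum>k<n. ?t k)"
    by (rule sum.mono_neutral_left) (use support in auto)
  also have "\<dots> = fib n"
    by (simp add: fib_eq_sum_diagonal shifted_aL_eq del: funpow.simps)
  finally show "finite {k. ?t k \<noteq> 0} \<and> Fibo n = (\<Sum>k | ?t k \<noteq> 0. ?t k)"
    using finite_subset[OF support] by (simp add: Fibo_eq_fib)
qed

end
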